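(* In the setting of the context (with $g$ unimodal, symmetric about $0$ and logconcave), $C(\theta)\ge C(2d_0)$ for all $\theta\in[0,d_1]$.
   Context: Let $g$ be a probability density on $\mathbb{R}$, unimodal and symmetric about $0$ (i.e. $g(z)=g(-z)$ and $g$ nonincreasing on $[0,\infty)$), and logconcave ($\log g$ concave on its support), with cdf $G$ and quantile function $G^{-1}(t)=\inf\{x:G(x)\ge t\}$. Let $X$ have density $g(x-\theta)$, $\theta\ge0$, and $P_\theta$ the corresponding probability. Fix $\alpha\in(0,1)$, and set $d_0=G^{-1}(\tfrac1{1+\alpha})$, $d_1=G^{-1}(1-\tfrac\alpha2)$. The HPD credible interval (prior $1_{[0,\infty)}(\theta)$, credibility $1-\alpha$) is $[l(X),u(X)]$ with $l(x)=\{x-G^{-1}(\tfrac12+\tfrac{1-\alpha}2G(x))\}1_{(d_0,\infty)}(x)$, $u(x)=x-G^{-1}(\alpha G(x))$ for $x\le d_0$ and $u(x)=x+G^{-1}(\tfrac12+\tfrac{1-\alpha}2G(x))$ for $x>d_0$. The frequentist coverage is $C(\theta)=P_\theta(l(X)\le\theta\le u(X))$. *)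

theory Defs
  imports "HOL-Analysis.Analysis"
begin

definition sym_unimodal_logconcave_density :: "(real \<Rightarrow> real) \<Rightarrow> bool" where
  "sym_unimodal_logconcave_density g \<longleftrightarrow>
     g \<in> borel_measurable lborel \<and>
     (\<forall>z. 0 \<le> g z) \<and>
     integrable lborel g \<and> (LINT z|lborel. g z) = 1 \<and>
     (\<forall>z. g z = g (- z)) \<and>
     (\<forall>x y. 0 \<le> x \<longrightarrow> x \<le> y \<longrightarrow> g y \<le> g x) \<and>
     concave_on {z. 0 < g z} (\<lambda>z. ln (g z))"

definition cdf_of :: "(real \<Rightarrow> real) \<Rightarrow> real \<Rightarrow> real" where
  "cdf_of g x = (LINT z:{..x}|lborel. g z)"

definition quantile :: "(real \<Rightarrow> real) \<Rightarrow> real \<Rightarrow> real" where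
  "quantile G t = Inf {x. t \<le> G x}"

definition hpd_d0 :: "(real \<Rightarrow> real) \<Rightarrow> real \<Rightarrow> real" where
  "hpd_d0 g \<alpha> = quantile (cdf_of g) (1 / (1 + \<alpha>))"

definition hpd_d1 :: "(real \<Rightarrow> real) \<Rightarrow> real \<Rightarrow> real" where
  "hpd_d1 g \<alpha> = quantile (cdf_of g) (1 - \<alpha> / 2)"

definition hpd_l :: "(real \<Rightarrow> real) \<Rightarrow> real \<Rightarrow> real \<Rightarrow> real" where
  "hpd_l g \<alpha> x =
     (if hpd_d0 g \<alpha> < x
      then x - quantile (cdf_of g) (1/2 + (1 - \<alpha>) / 2 * cdf_of g x)
      else 0)"

definition hpd_u :: "(real \<Rightarrow> real) \<Rightarrow> real \<Rightarrow> real \<Rightarrow> real" where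
  "hpd_u g \<alpha> x =
     (if x \<le> hpd_d0 g \<alpha>
      then x - quantile (cdf_of g) (\<alpha> * cdf_of g x)
      else x + quantile (cdf_of g) (1/2 + (1 - \<alpha>) / 2 * cdf_of g x))"

definition coverage :: "(real \<Rightarrow> real) \<Rightarrow> real \<Rightarrow> real \<Rightarrow> real" where
  "coverage g \<alpha> \<theta> =
     measure (density lborel (\<lambda>x. ennreal (g (x - \<theta>))))
       {x. hpd_l g \<alpha> x \<le> \<theta> \<and> \<theta> \<le> hpd_u g \<alpha> x}"

end

theory Submission
  imports Defs "HOL-Probability.Distribution_Functions"
begin

(*
  Write Z = X - \<theta>, which has density g and cdf G, and let K = G d0 - G (-d1); by symmetry
  of g also K = G d1 - G (-d0).  The theorem follows from two bounds:
    (i)  for 0 \<le> \<theta> \<le> d1 the interval covers \<theta> whenever -d1 < Z \<le> d0, so C \<theta> \<ge> K;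
    (ii) at \<theta> = 2 d0 coverage forces -d0 \<le> Z \<le> d1 up to a g-null set, so C (2 d0) \<le> K.
  Both rest on the log-concavity of the cdf, G (x - c) * G y \<le> G x * G (y - c) for x \<le> y,
  c \<ge> 0, which is obtained by integrating the corresponding inequality for g.  Bound (ii)
  also needs a strict form of this inequality, where the positivity of g near d0 enters.
*)

section \<open>Log-concave functions\<close>

lemma logconcave_shift_ineq:
  fixes f :: "real \<Rightarrow> real"
  assumes nonneg: "\<And>z. 0 \<le> f z" and lc: "concave_on {z. 0 < f z} (\<lambda>z. ln (f z))"
    and "s \<le> t" "0 \<le> c"
  shows "f (s - c) * f t \<le> f s * f (t - c)"
proof (cases "f (s - c) = 0 \<or> f t = 0 \<or> c = 0")
  case True
  then show ?thesis using nonneg by auto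
next
  case False
  let ?S = "{z. 0 < f z}"
  have pos: "0 < f (s - c)" "0 < f t" and "0 < c"
    using False nonneg assms(4) by (auto simp: order_le_less)
  define lam where "lam = c / (t - (s - c))"
  have lam01: "0 \<le> lam" "lam \<le> 1"
    using assms(3) \<open>0 < c\<close> by (auto simp: lam_def field_simps)
  have "lam * (t - (s - c)) = c"
    using assms(3) \<open>0 < c\<close> by (simp add: lam_def)
  then have s_comb: "s = (1 - lam) *\<^sub>R (s - c) + lam *\<^sub>R t"
    and t_comb: "t - c = (1 - (1 - lam)) *\<^sub>R (s - c) + (1 - lam) *\<^sub>R t"
    by (simp_all add: algebra_simps)
  have ends: "s - c \<in> ?S" "t \<in> ?S" using pos by auto
  have cvx: "convex ?S" using lc concave_on_imp_convex by blast
  have inner: "0 < f s" "0 < f (t - c)"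
    using convexD_alt[OF cvx ends lam01] convexD_alt[OF cvx ends, of "1 - lam"] lam01
      s_comb t_comb by auto
  have "ln (f s) \<ge> (1 - lam) * ln (f (s - c)) + lam * ln (f t)"
    using concave_onD[OF lc lam01 ends] s_comb by simp
  moreover have "ln (f (t - c)) \<ge> lam * ln (f (s - c)) + (1 - lam) * ln (f t)"
    using concave_onD[OF lc _ _ ends, of "1 - lam"] lam01 t_comb by simp
  ultimately have "ln (f (s - c) * f t) \<le> ln (f s * f (t - c))"
    using pos inner by (simp add: ln_mult algebra_simps)
  then show ?thesis using pos inner by simp
qed

section \<open>The distribution with density g\<close>

locale sym_logconcave_density =
  fixes g :: "real \<Rightarrow> real"
  assumes density: "sym_unimodal_logconcave_density g"
begin

lemma g_measurable[measurable]: "g \<in> borel_measurable borel"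
  using density unfolding sym_unimodal_logconcave_density_def by (simp add: measurable_lborel1)

lemma g_nonneg: "0 \<le> g z"
  using density unfolding sym_unimodal_logconcave_density_def by auto

lemma g_sym: "g (- z) = g z"
  using density unfolding sym_unimodal_logconcave_density_def by metis

lemma g_abs_antimono: "\<bar>s\<bar> \<le> \<bar>t\<bar> \<Longrightarrow> g t \<le> g s"
  using density g_sym[of s] g_sym[of t] unfolding sym_unimodal_logconcave_density_def
  by (smt (verit) abs_ge_zero abs_of_nonneg abs_of_nonpos)

lemma g_shift_ineq: "s \<le> t \<Longrightarrow> 0 \<le> c \<Longrightarrow> g (s - c) * g t \<le> g s * g (t - c)"
  using density unfolding sym_unimodal_logconcave_density_def
  by (intro logconcave_shift_ineq) auto

text \<open>M is the law of the error Z = X - \<theta>.\<close>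
definition M :: "real measure" where "M = density lborel (\<lambda>x. ennreal (g x))"

lemma sets_M[measurable_cong]: "sets M = sets borel"
  by (simp add: M_def)

lemma emeasure_M: "A \<in> sets borel \<Longrightarrow> emeasure M A = (\<integral>\<^sup>+ x. ennreal (g x) * indicator A x \<partial>lborel)"
  unfolding M_def by (subst emeasure_density) auto

lemma real_distribution_M: "real_distribution M"
proof -
  have "emeasure M UNIV = ennreal (LINT z|lborel. g z)"
    using density unfolding sym_unimodal_logconcave_density_def
    by (simp add: emeasure_M nn_integral_eq_integral g_nonneg)
  then have "prob_space M"
    using density unfolding sym_unimodal_logconcave_density_def
    by (intro prob_spaceI) (simp add: M_def)
  then show ?thesis
    by (simp add: real_distribution_def real_distribution_axioms_def sets_M)
qed

end

sublocale sym_logconcave_density \<subseteq> real_distribution M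
  by (rule real_distribution_M)

context sym_logconcave_density begin

abbreviation G :: "real \<Rightarrow> real" where "G \<equiv> cdf M"

lemma cdf_of_eq: "cdf_of g = G"
proof
  fix x
  have "emeasure M {..x} = (\<integral>\<^sup>+ z. ennreal (g z * indicator {..x} z) \<partial>lborel)"
    by (simp add: emeasure_M, intro nn_integral_cong) (auto split: split_indicator)
  also have "\<dots> = ennreal (\<integral> z. g z * indicator {..x} z \<partial>lborel)"
    using density integrable_mult_indicator[of "{..x}" lborel g]
    unfolding sym_unimodal_logconcave_density_def
    by (intro nn_integral_eq_integral) (auto simp: g_nonneg mult.commute)
  finally have "measure M {..x} = (\<integral> z. g z * indicator {..x} z \<partial>lborel)"
    unfolding measure_def by (simp add: g_nonneg)
  then show "cdf_of g x = G x"
    unfolding cdf_of_def cdf_def set_lebesgue_integral_def by (simp add: mult.commute)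
qed

lemma null_set_M:
  assumes "A \<in> sets borel" "\<And>x. x \<in> A \<Longrightarrow> g x = 0"
  shows "measure M A = 0"
proof -
  have "\<And>x. ennreal (g x) * indicator A x = 0" using assms(2) by (auto simp: indicator_def)
  then have "emeasure M A = 0" using assms(1) by (simp only: emeasure_M) simp
  then show ?thesis by (simp add: measure_def)
qed

lemma measure_singleton: "measure M {x} = 0"
proof -
  have "emeasure M {x} = 0" by (simp add: emeasure_M nn_integral_null_set)
  then show ?thesis by (simp add: measure_def)
qed

lemma G_continuous: "continuous_on S G"
  using isCont_cdf measure_singleton by (simp add: continuous_at_imp_continuous_on)

lemma G_measurable[measurable]: "G \<in> borel_measurable borel"
  by (rule borel_measurable_continuous_onI) (rule G_continuous)

lemma G_mono: "x \<le> y \<Longrightarrow> G x \<le> G y"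
  by (rule cdf_nondecreasing)

lemma G_interval: "a \<le> b \<Longrightarrow> measure M {a<..b} = G b - G a"
  by (cases "a < b") (simp_all add: cdf_diff_eq)

lemma G_closed_interval:
  assumes "a \<le> b"
  shows "measure M {a..b} = G b - G a"
proof -
  have "{a..b} = {a} \<union> {a<..b}" using assms by auto
  moreover have "measure M ({a} \<union> {a<..b}) = measure M {a} + measure M {a<..b}"
    by (rule finite_measure_Union) auto
  ultimately have "measure M {a..b} = measure M {a} + measure M {a<..b}" by (simp only:)
  then show ?thesis using assms measure_singleton G_interval by simp
qed

lemma G_sym: "G (- x) = 1 - G x"
proof -
  have "emeasure M {..-x} = (\<integral>\<^sup>+ z. ennreal (g (-z)) * indicator {..-x} (-z) \<partial>lborel)"
    using nn_integral_real_affine[of "\<lambda>z. ennreal (g z) * indicator {..-x} z" "-1" 0]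
    by (simp add: emeasure_M)
  also have "\<dots> = emeasure M {x..}"
    by (simp add: emeasure_M g_sym, intro nn_integral_cong) (auto split: split_indicator)
  finally have "G (- x) = measure M {x..}"
    by (simp add: measure_def cdf_def)
  also have "\<dots> = measure M ({x} \<union> {x<..})"
    by (intro arg_cong[where f="measure M"]) auto
  also have "\<dots> = measure M (space M - {..x})"
    using measure_singleton by (subst finite_measure_Union) (auto intro: arg_cong[where f="measure M"])
  also have "\<dots> = 1 - G x" by (subst prob_compl) (auto simp: cdf_def)
  finally show ?thesis .
qed

lemma G_zero: "G 0 = 1/2"
  using G_sym[of 0] by simp

abbreviation Q :: "real \<Rightarrow> real" where "Q \<equiv> quantile G"

lemma quantile_set_bdd_below: "0 < t \<Longrightarrow> bdd_below {x. t \<le> G x}"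
proof -
  assume "0 < t"
  then have "eventually (\<lambda>x. G x < t) at_bot"
    using order_tendstoD(2)[OF cdf_lim_at_bot] by simp
  then obtain y where "G y < t" by (auto simp: eventually_at_bot_linorder)
  then have "y \<le> x" if "t \<le> G x" for x
    using that G_mono[of x y] by (cases "y \<le> x") auto
  then show ?thesis by (auto simp: bdd_below_def)
qed

lemma quantile_le: "0 < t \<Longrightarrow> t \<le> G y \<Longrightarrow> Q t \<le> y"
  unfolding quantile_def using quantile_set_bdd_below by (auto intro: cInf_lower)

text \<open>Since G is continuous, G (Q t) = t on (0,1) and Q is a right inverse of G.\<close>
lemma G_quantile: assumes "0 < t" "t < 1" shows "G (Q t) = t"
proof -
  have "eventually (\<lambda>x. t < G x) at_top"
    using assms order_tendstoD(1)[OF cdf_lim_at_top_prob] by simp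
  then obtain b where b: "t < G b" by (auto simp: eventually_at_top_linorder)
  have "eventually (\<lambda>x. G x < t) at_bot"
    using assms order_tendstoD(2)[OF cdf_lim_at_bot] by simp
  then obtain a where a: "G a < t" by (auto simp: eventually_at_bot_linorder)
  have "a \<le> b" using a b G_mono[of b a] by (cases "a \<le> b") auto
  then obtain y where y: "G y = t"
    using IVT'[of G a t b] a b G_continuous by force
  then have "G (Q t) \<le> t" using quantile_le[of t y] assms G_mono[of "Q t" y] by simp
  moreover have "Q t \<in> {x. t \<le> G x}"
    unfolding quantile_def
  proof (rule closed_contains_Inf)
    show "{x. t \<le> G x} \<noteq> {}" using b by (auto intro: less_imp_le)
    show "closed {x. t \<le> G x}"
      using closed_Collect_le[OF continuous_on_const G_continuous] by simp
  qed (use quantile_set_bdd_below assms in auto)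
  ultimately show ?thesis by simp
qed

lemma quantile_le_iff: "0 < t \<Longrightarrow> t < 1 \<Longrightarrow> Q t \<le> y \<longleftrightarrow> t \<le> G y"
  using quantile_le G_quantile G_mono by metis

lemma quantile_mono: "0 < s \<Longrightarrow> s \<le> t \<Longrightarrow> t < 1 \<Longrightarrow> Q s \<le> Q t"
  using quantile_le_iff G_quantile by simp

lemma quantile_measurable[measurable]: "Q \<in> borel_measurable borel"
proof (rule borel_measurable_piecewise_mono[of "{{..0::real}, {0<..<1}, {1}, {1<..}}"])
  have "\<And>t. t \<le> 0 \<Longrightarrow> {x. t \<le> G x} = UNIV" using cdf_nonneg by (auto intro: order_trans)
  then have "mono_on {..0} Q" by (auto simp: mono_on_def quantile_def)
  moreover have "\<And>t. 1 < t \<Longrightarrow> {x. t \<le> G x} = {}" using cdf_bounded_prob by (smt (verit) Collect_empty_eq)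
  then have "mono_on {1<..} Q" by (auto simp: mono_on_def quantile_def)
  moreover have "mono_on {0<..<1} Q" by (auto simp: mono_on_def intro: quantile_mono)
  ultimately show "\<And>c. c \<in> {{..0}, {0<..<1}, {1}, {1<..}} \<Longrightarrow> mono_on c Q" by (auto simp: mono_on_def)
qed auto

lemma nn_integral_shifted_density:
  assumes "A \<in> sets borel"
  shows "(\<integral>\<^sup>+ s. ennreal (g (s - c)) * indicator A s \<partial>lborel) = emeasure M {z. z + c \<in> A}"
proof -
  have "(\<integral>\<^sup>+ s. ennreal (g (s - c)) * indicator A s \<partial>lborel)
      = (\<integral>\<^sup>+ z. ennreal (g z) * indicator A (c + z) \<partial>lborel)"
    using assms nn_integral_real_affine[of "\<lambda>s. ennreal (g (s - c)) * indicator A s" 1 c] by simp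
  also have "\<dots> = emeasure M {z. z + c \<in> A}"
    using assms by (simp add: emeasure_M measurable_sets_borel add.commute indicator_def)
  finally show ?thesis .
qed

lemma nn_integral_shifted_atMost:
  "(\<integral>\<^sup>+ s. ennreal (g (s - c)) * indicator {..x} s \<partial>lborel) = ennreal (G (x - c))"
proof -
  have "{z. z + c \<in> {..x}} = {..x - c}" by auto
  then show ?thesis by (simp add: nn_integral_shifted_density emeasure_eq_measure cdf_def)
qed

lemma nn_integral_shifted_interval:
  assumes "a \<le> b"
  shows "(\<integral>\<^sup>+ s. ennreal (g (s - c)) * indicator {a<..b} s \<partial>lborel) = ennreal (G (b - c) - G (a - c))"
proof -
  have "{z. z + c \<in> {a<..b}} = {a - c<..b - c}" by auto
  then show ?thesis
    using assms by (simp add: nn_integral_shifted_density emeasure_eq_measure G_interval)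
qed

lemma G_increment_lower:
  assumes "a \<le> b" "0 \<le> m" "\<And>t. a < t \<Longrightarrow> t \<le> b \<Longrightarrow> m \<le> g t"
  shows "m * (b - a) \<le> G b - G a"
proof -
  have "(\<integral>\<^sup>+ t. ennreal m * indicator {a<..b} t \<partial>lborel)
      \<le> (\<integral>\<^sup>+ t. ennreal (g (t - 0)) * indicator {a<..b} t \<partial>lborel)"
    by (intro nn_integral_mono) (auto split: split_indicator intro!: ennreal_leI assms(3))
  then have "ennreal (m * (b - a)) \<le> ennreal (G b - G a)"
    using assms(1,2) nn_integral_shifted_interval[OF assms(1), of 0]
    by (simp add: nn_integral_cmult_indicator ennreal_mult)
  moreover have "0 \<le> G b - G a" using G_mono assms(1) by simp
  ultimately show ?thesis by (simp add: ennreal_le_iff)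
qed

section \<open>Log-concavity of the cdf\<close>

text \<open>Mixed form of the shift inequality, obtained by integrating it over s \<le> x.\<close>
lemma G_g_shift_ineq:
  assumes "x \<le> t" "0 \<le> c"
  shows "G (x - c) * g t \<le> G x * g (t - c)"
proof -
  have "(\<integral>\<^sup>+ s. ennreal (g t) * (ennreal (g (s - c)) * indicator {..x} s) \<partial>lborel)
     \<le> (\<integral>\<^sup>+ s. ennreal (g (t - c)) * (ennreal (g (s - 0)) * indicator {..x} s) \<partial>lborel)"
  proof (intro nn_integral_mono)
    fix s
    show "ennreal (g t) * (ennreal (g (s - c)) * indicator {..x} s)
       \<le> ennreal (g (t - c)) * (ennreal (g (s - 0)) * indicator {..x} s)"
    proof (cases "s \<le> x")
      case True
      then have "g t * g (s - c) \<le> g (t - c) * g s"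
        using g_shift_ineq[of s t c] assms by (simp add: mult.commute)
      then show ?thesis using True g_nonneg by (simp add: ennreal_mult[symmetric] ennreal_leI)
    qed simp
  qed
  then have "ennreal (g t * G (x - c)) \<le> ennreal (g (t - c) * G x)"
    using nn_integral_shifted_atMost[of c x] nn_integral_shifted_atMost[of 0 x]
    by (simp add: nn_integral_cmult ennreal_mult g_nonneg cdf_nonneg)
  then show ?thesis
    using g_nonneg cdf_nonneg by (simp add: ennreal_le_iff mult.commute)
qed

lemma G_shift_integrated:
  assumes "m \<le> y" "0 \<le> \<delta>" "0 \<le> A" "0 \<le> B"
    and pointwise: "\<And>t. m < t \<Longrightarrow> t \<le> y \<Longrightarrow> A * g t + \<delta> \<le> B * g (t - c)"
  shows "A * (G y - G m) + \<delta> * (y - m) \<le> B * (G (y - c) - G (m - c))"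
proof -
  let ?I = "indicator {m<..y} :: real \<Rightarrow> ennreal"
  have "(\<integral>\<^sup>+ t. ennreal A * (ennreal (g (t - 0)) * ?I t) + ennreal \<delta> * ?I t \<partial>lborel)
     \<le> (\<integral>\<^sup>+ t. ennreal B * (ennreal (g (t - c)) * ?I t) \<partial>lborel)"
  proof (intro nn_integral_mono)
    fix t
    have "m < t \<Longrightarrow> t \<le> y \<Longrightarrow> ennreal (A * g t + \<delta>) \<le> ennreal (B * g (t - c))"
      using pointwise by (intro ennreal_leI) simp
    then show "ennreal A * (ennreal (g (t - 0)) * ?I t) + ennreal \<delta> * ?I t
       \<le> ennreal B * (ennreal (g (t - c)) * ?I t)"
      using assms(2-4) g_nonneg[of t] g_nonneg[of "t - c"]
      by (auto simp: indicator_def ennreal_plus ennreal_mult)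
  qed
  then have "ennreal (A * (G y - G m) + \<delta> * (y - m)) \<le> ennreal (B * (G (y - c) - G (m - c)))"
    using assms(1-4) nn_integral_shifted_interval[OF assms(1), of 0]
      nn_integral_shifted_interval[OF assms(1), of c] G_mono[of m y] G_mono[of "m - c" "y - c"]
    by (simp add: nn_integral_add nn_integral_cmult nn_integral_cmult_indicator
        ennreal_mult ennreal_plus)
  moreover have "0 \<le> G (y - c) - G (m - c)" using G_mono assms(1) by simp
  ultimately show ?thesis using assms(4) by (simp add: ennreal_le_iff)
qed

lemma G_logconcave_increment:
  assumes "x \<le> y" "0 \<le> c"
  shows "G (x - c) * (G y - G x) \<le> G x * (G (y - c) - G (x - c))"
  using G_shift_integrated[of x y 0 "G (x - c)" "G x" c] G_g_shift_ineq[of x _ c] assms cdf_nonneg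
  by simp

lemma G_logconcave:
  assumes "x \<le> y" "0 \<le> c"
  shows "G (x - c) * G y \<le> G x * G (y - c)"
  using G_logconcave_increment[OF assms] by (simp add: algebra_simps)

lemma G_logconcave_strict:
  assumes "x \<le> m" "m < y" "0 \<le> c" "G (x - c) < G x" "0 < g y"
    and between: "\<And>t. m < t \<Longrightarrow> t \<le> y \<Longrightarrow> g y \<le> g t \<and> g t \<le> g (t - c)"
  shows "G (x - c) * G y < G x * G (y - c)"
proof -
  define A B where "A = G (x - c)" and "B = G x"
  define \<delta> where "\<delta> = (B - A) * g y"
  have "0 \<le> A" "A < B" "0 < \<delta>" using assms(4,5) cdf_nonneg by (auto simp: A_def B_def \<delta>_def)
  have "A * (G m - G x) \<le> B * (G (m - c) - G (x - c))"
    using G_logconcave_increment[OF assms(1,3)] by (simp add: A_def B_def)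
  moreover have "A * (G y - G m) + \<delta> * (y - m) \<le> B * (G (y - c) - G (m - c))"
  proof (rule G_shift_integrated)
    fix t assume "m < t" "t \<le> y"
    then have "(B - A) * g y \<le> (B - A) * g t" "B * g t \<le> B * g (t - c)"
      using between \<open>A < B\<close> \<open>0 \<le> A\<close> by (auto intro: mult_left_mono)
    then show "A * g t + \<delta> \<le> B * g (t - c)" by (simp add: \<delta>_def algebra_simps)
  qed (use assms \<open>0 < \<delta>\<close> \<open>0 \<le> A\<close> \<open>A < B\<close> in auto)
  moreover have "0 < \<delta> * (y - m)" using \<open>0 < \<delta>\<close> assms(2) by simp
  ultimately show ?thesis by (simp add: A_def B_def algebra_simps)
qed

end

section \<open>The constants d0 and d1\<close>

locale hpd_setting = sym_logconcave_density +
  fixes \<alpha> :: real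
  assumes alpha_pos: "0 < \<alpha>" and alpha_lt1: "\<alpha> < 1"
begin

abbreviation d0 :: real where "d0 \<equiv> hpd_d0 g \<alpha>"
abbreviation d1 :: real where "d1 \<equiv> hpd_d1 g \<alpha>"

lemma G_d0: "G d0 = 1 / (1 + \<alpha>)"
  unfolding hpd_d0_def cdf_of_eq using alpha_pos by (intro G_quantile) (auto simp: field_simps)

lemma G_minus_d0: "G (- d0) = \<alpha> / (1 + \<alpha>)"
  using G_sym[of d0] G_d0 alpha_pos by (simp add: field_simps)

lemma G_d1: "G d1 = 1 - \<alpha> / 2"
  unfolding hpd_d1_def cdf_of_eq using alpha_pos alpha_lt1 by (intro G_quantile) auto

lemma G_minus_d1: "G (- d1) = \<alpha> / 2"
  using G_sym[of d1] G_d1 by simp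

lemma d0_pos: "0 < d0"
  using G_mono[of d0 0] G_d0 G_zero alpha_pos alpha_lt1 by (cases "0 < d0") (auto simp: field_simps)

lemma d0_le_d1: "d0 \<le> d1"
proof -
  have "1 / (1 + \<alpha>) \<le> 1 - \<alpha> / 2" using alpha_pos alpha_lt1 by (simp add: field_simps)
  then show ?thesis
    unfolding hpd_d0_def hpd_d1_def cdf_of_eq using alpha_pos alpha_lt1
    by (intro quantile_mono) auto
qed

text \<open>g cannot vanish at d0: otherwise, by unimodality, (d0, \<infinity>) would be a null set,
  although it has probability 1 - G d0 > 0.\<close>
lemma g_d0_pos: "0 < g d0"
proof (rule ccontr)
  assume "\<not> 0 < g d0"
  then have "\<And>t. t \<in> {d0<..} \<Longrightarrow> g t = 0"
    using g_abs_antimono[of d0] d0_pos g_nonneg by (smt (verit) greaterThan_iff)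
  then have "measure M {d0<..} = 0" by (intro null_set_M) auto
  moreover have "measure M {d0<..} = 1 - G d0"
    using prob_compl[of "{..d0}"] by (simp add: cdf_def Compl_eq_Diff_UNIV[symmetric] Compl_atMost)
  ultimately show False using G_d0 alpha_pos by (simp add: field_simps)
qed

text \<open>d1 \<le> 2 d0: by log-concavity G (-2 d0) \<le> 2 G (-d0)^2 = 2 (\<alpha> / (1 + \<alpha>))^2, and this
  is at most \<alpha> / 2 because 4 \<alpha> \<le> (1 + \<alpha>)^2.\<close>
lemma d1_le_2d0: "d1 \<le> 2 * d0"
proof -
  have "G (- d0 - d0) * G 0 \<le> G (- d0) * G (0 - d0)"
    using G_logconcave[of "- d0" 0 d0] d0_pos by simp
  then have "G (- (2 * d0)) \<le> 2 * (\<alpha> / (1 + \<alpha>))\<^sup>2"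
    using G_minus_d0 G_zero by (simp add: power2_eq_square ac_simps)
  also have "\<dots> \<le> \<alpha> / 2"
  proof -
    have "4 * \<alpha> \<le> (1 + \<alpha>)\<^sup>2"
      using zero_le_power2[of "1 - \<alpha>"] by (simp add: power2_eq_square algebra_simps)
    then have "\<alpha> * (4 * \<alpha>) \<le> \<alpha> * (1 + \<alpha>)\<^sup>2"
      using alpha_pos by (intro mult_left_mono) auto
    then show ?thesis
      using alpha_pos by (simp add: power_divide pos_divide_le_eq power2_eq_square mult.assoc)
  qed
  finally have "1 - \<alpha> / 2 \<le> G (2 * d0)" using G_sym[of "2 * d0"] by simp
  then show ?thesis
    unfolding hpd_d1_def cdf_of_eq using alpha_pos alpha_lt1 by (intro quantile_le) auto
qed

lemma G_shift_d1: "0 \<le> x \<Longrightarrow> \<alpha> * G x \<le> G (x - d1)"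
  using G_logconcave[of 0 x d1] d0_pos d0_le_d1 G_minus_d1 G_zero by simp

lemma G_shift_2d0_strict:
  assumes x: "x < d0" and pos: "0 < g (x - 2 * d0)"
  shows "G (x - 2 * d0) < \<alpha> * G x"
proof -
  have "G (x - d0 - d0) * G 0 \<le> G (x - d0) * G (0 - d0)"
    using G_logconcave[of "x - d0" 0 d0] x d0_pos by simp
  then have first_shift: "G (x - 2 * d0) \<le> 2 * \<alpha> / (1 + \<alpha>) * G (x - d0)"
    using G_minus_d0 G_zero alpha_pos by (simp add: field_simps)
  have "g (x - 2 * d0) * (x - (x - d0)) \<le> G x - G (x - d0)"
    by (rule G_increment_lower) (use x d0_pos g_nonneg in \<open>auto intro!: g_abs_antimono\<close>)
  then have mass: "G (x - d0) < G x"
    using pos d0_pos by (smt (verit) mult_pos_pos)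
  have "G (x - d0) * G d0 < G x * G (d0 - d0)"
  proof (rule G_logconcave_strict[where m = "max x (d0 / 2)"])
    fix t assume "max x (d0 / 2) < t" "t \<le> d0"
    then show "g d0 \<le> g t \<and> g t \<le> g (t - d0)"
      using d0_pos by (auto intro!: g_abs_antimono)
  qed (use x d0_pos mass g_d0_pos in auto)
  then have second_shift: "G (x - d0) < (1 + \<alpha>) / 2 * G x"
    using G_d0 G_zero alpha_pos by (simp add: field_simps)
  have "2 * \<alpha> / (1 + \<alpha>) * G (x - d0) < 2 * \<alpha> / (1 + \<alpha>) * ((1 + \<alpha>) / 2 * G x)"
    using second_shift alpha_pos by (intro mult_strict_left_mono) auto
  also have "\<dots> = \<alpha> * G x" using alpha_pos by (simp add: field_simps)
  finally show ?thesis using first_shift by simp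
qed

section \<open>Coverage of the HPD interval\<close>

definition covering_set :: "real \<Rightarrow> real set" where
  "covering_set \<theta> = {x. hpd_l g \<alpha> x \<le> \<theta> \<and> \<theta> \<le> hpd_u g \<alpha> x}"

definition level :: "real \<Rightarrow> real" where "level x = 1/2 + (1 - \<alpha>) / 2 * G x"

lemma hpd_l_eq: "hpd_l g \<alpha> x = (if d0 < x then x - Q (level x) else 0)"
  by (simp add: hpd_l_def cdf_of_eq level_def)

lemma hpd_u_eq: "hpd_u g \<alpha> x = (if x \<le> d0 then x - Q (\<alpha> * G x) else x + Q (level x))"
  by (simp add: hpd_u_def cdf_of_eq level_def)

lemma level_bounds: "0 < level x" "level x \<le> 1 - \<alpha> / 2" "level x < 1"
proof -
  have "0 \<le> (1 - \<alpha>) / 2 * G x" "(1 - \<alpha>) / 2 * G x \<le> (1 - \<alpha>) / 2"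
    using alpha_lt1 cdf_nonneg[of x] mult_left_mono[OF cdf_bounded_prob[of x], of "(1 - \<alpha>) / 2"]
    by auto
  then show "0 < level x" "level x \<le> 1 - \<alpha> / 2" "level x < 1"
    using alpha_pos by (auto simp: level_def)
qed

lemma covering_set_measurable: "covering_set \<theta> \<in> sets borel"
  unfolding covering_set_def hpd_l_eq hpd_u_eq level_def by measurable

lemma coverage_eq: "coverage g \<alpha> \<theta> = measure M {z. z + \<theta> \<in> covering_set \<theta>}"
proof -
  have "emeasure (density lborel (\<lambda>x. ennreal (g (x - \<theta>)))) (covering_set \<theta>)
      = emeasure M {z. z + \<theta> \<in> covering_set \<theta>}"
    using covering_set_measurable
    by (simp add: emeasure_density nn_integral_shifted_density)
  then show ?thesis
    unfolding coverage_def covering_set_def[symmetric] measure_def by simp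
qed

text \<open>Above d0 both
  endpoints are at distance at least d0 from x (and d1 \<le> 2 d0); below d0 the upper endpoint
  exceeds \<theta> by the ratio bound G_shift_d1.\<close>
lemma covers_centered:
  assumes \<theta>: "0 \<le> \<theta>" "\<theta> \<le> d1" and z: "- d1 < z" "z \<le> d0"
  shows "z + \<theta> \<in> covering_set \<theta>"
proof (cases "d0 < z + \<theta>")
  case True
  have "(1 - \<alpha>) / 2 * (1 / (1 + \<alpha>)) \<le> (1 - \<alpha>) / 2 * G (z + \<theta>)"
    using G_mono[OF less_imp_le[OF True]] G_d0 alpha_lt1 by (intro mult_left_mono) auto
  moreover have "1/2 + (1 - \<alpha>) / 2 * (1 / (1 + \<alpha>)) = 1 / (1 + \<alpha>)"
    using alpha_pos by (simp add: field_simps)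
  ultimately have "1 / (1 + \<alpha>) \<le> level (z + \<theta>)" unfolding level_def by linarith
  then have "d0 \<le> Q (level (z + \<theta>))"
    unfolding hpd_d0_def cdf_of_eq using level_bounds alpha_pos by (intro quantile_mono) auto
  then show ?thesis
    using True z \<theta> d1_le_2d0 by (simp add: covering_set_def hpd_l_eq hpd_u_eq)
next
  case False
  have "\<alpha> * G (z + \<theta>) \<le> G z"
  proof (cases "z + \<theta> \<le> 0")
    case True
    then have "\<alpha> * G (z + \<theta>) \<le> \<alpha> * (1/2)"
      using G_mono[of "z + \<theta>" 0] G_zero alpha_pos by (intro mult_left_mono) auto
    also have "\<dots> \<le> G z" using G_mono[of "- d1" z] z G_minus_d1 by simp
    finally show ?thesis .
  next
    case False
    then have "\<alpha> * G (z + \<theta>) \<le> G (z + \<theta> - d1)" using G_shift_d1 by simp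
    also have "\<dots> \<le> G z" using G_mono \<theta> by simp
    finally show ?thesis .
  qed
  moreover have "0 < \<alpha> * G (z + \<theta>)"
    using G_mono[of "- d1" z] G_mono[of z "z + \<theta>"] z \<theta> G_minus_d1 alpha_pos by simp
  ultimately have "Q (\<alpha> * G (z + \<theta>)) \<le> z" by (intro quantile_le)
  then show ?thesis using False \<theta> by (simp add: covering_set_def hpd_l_eq hpd_u_eq)
qed

lemma covers_2d0_only_centered:
  assumes cover: "z + 2 * d0 \<in> covering_set (2 * d0)"
  shows "z \<in> {- d0..d1} \<or> g z = 0"
proof (cases "d0 < z + 2 * d0")
  case True
  have "Q (level (z + 2 * d0)) \<le> d1"
    unfolding hpd_d1_def cdf_of_eq using level_bounds alpha_pos by (intro quantile_mono) auto
  then show ?thesis using cover True by (simp add: covering_set_def hpd_l_eq)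
next
  case False
  show ?thesis
  proof (rule ccontr)
    assume "\<not> ?thesis"
    then have outside: "z \<notin> {- d0..d1}" and "g z \<noteq> 0" by auto
    have "z < - d0" using outside False d0_pos d0_le_d1 by auto
    then have below: "z + 2 * d0 < d0" by simp
    have pos: "0 < g z" using \<open>g z \<noteq> 0\<close> g_nonneg[of z] by simp
    have lt: "G z < \<alpha> * G (z + 2 * d0)"
      using G_shift_2d0_strict[OF below] pos by simp
    have "\<alpha> * G (z + 2 * d0) < 1"
      using mult_left_mono[OF cdf_bounded_prob, of \<alpha>] alpha_pos alpha_lt1 by (smt (verit))
    moreover have "0 < \<alpha> * G (z + 2 * d0)" using lt cdf_nonneg[of z] by simp
    moreover have "Q (\<alpha> * G (z + 2 * d0)) \<le> z"
      using cover False by (simp add: covering_set_def hpd_u_eq)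
    ultimately show False using lt quantile_le_iff by simp
  qed
qed

lemma coverage_lower:
  assumes "0 \<le> \<theta>" "\<theta> \<le> d1"
  shows "G d0 - G (- d1) \<le> coverage g \<alpha> \<theta>"
proof -
  have "{- d1<..d0} \<subseteq> {z. z + \<theta> \<in> covering_set \<theta>}"
    using covers_centered[OF assms] by auto
  then have "measure M {- d1<..d0} \<le> measure M {z. z + \<theta> \<in> covering_set \<theta>}"
    using covering_set_measurable by (intro finite_measure_mono) (auto simp: measurable_sets_borel)
  then show ?thesis
    using G_interval[of "- d1" d0] d0_pos d0_le_d1 coverage_eq by simp
qed

lemma coverage_upper: "coverage g \<alpha> (2 * d0) \<le> G d1 - G (- d0)"
proof -
  let ?Z = "{z. g z = 0}"
  have null: "measure M ?Z = 0" by (rule null_set_M) auto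
  have "{z. z + 2 * d0 \<in> covering_set (2 * d0)} \<subseteq> {- d0..d1} \<union> ?Z"
  proof
    fix z assume "z \<in> {z. z + 2 * d0 \<in> covering_set (2 * d0)}"
    then show "z \<in> {- d0..d1} \<union> ?Z" using covers_2d0_only_centered[of z] by simp
  qed
  then have "measure M {z. z + 2 * d0 \<in> covering_set (2 * d0)} \<le> measure M ({- d0..d1} \<union> ?Z)"
    using covering_set_measurable
    by (intro finite_measure_mono) (auto simp: measurable_sets_borel)
  also have "\<dots> \<le> measure M {- d0..d1} + measure M ?Z"
    by (intro measure_Un_le) auto
  also have "\<dots> = G d1 - G (- d0)"
    using G_closed_interval[of "- d0" d1] null d0_pos d0_le_d1 by simp
  finally show ?thesis using coverage_eq by simp
qed

end

theorem lemma6: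
  fixes g :: "real \<Rightarrow> real" and \<alpha> \<theta> :: real
  assumes "sym_unimodal_logconcave_density g"
    and "0 < \<alpha>" and "\<alpha> < 1"
    and "0 \<le> \<theta>" and "\<theta> \<le> hpd_d1 g \<alpha>"
  shows "coverage g \<alpha> \<theta> \<ge> coverage g \<alpha> (2 * hpd_d0 g \<alpha>)"
proof -
  interpret hpd_setting g \<alpha> using assms(1-3) by unfold_locales
  have bounds_agree: "G d0 - G (- d1) = G d1 - G (- d0)"
    using G_sym[of d0] G_sym[of d1] by simp
  show ?thesis
    using coverage_upper coverage_lower[OF assms(4,5)] bounds_agree by simp
qed

end
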